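(* For every $x\in\mathbb{R}=\mathfrak{C}(\mathbb{Q})$, $\mathrm{compress}(x)\asymp x$, where $\mathrm{compress}(x)=\lambda\varepsilon.\,\mathrm{approx}(x(\tfrac{\varepsilon}{2}),\tfrac{\varepsilon}{2})$.
   Context: $\mathbb{Q}^+$ denotes the strictly positive rationals. $\mathbb{Q}$ is a metric space with $B_\varepsilon(a,b)$ iff $|a-b|\le\varepsilon$ and equivalence being equality. $\mathbb{R}=\mathfrak{C}(\mathbb{Q})$ is the set of regular functions $x:\mathbb{Q}^+\to\mathbb{Q}$, i.e. $|x(\varepsilon_1)-x(\varepsilon_2)|\le\varepsilon_1+\varepsilon_2$ for all $\varepsilon_1,\varepsilon_2\in\mathbb{Q}^+$, with $x\asymp y$ iff $|x(\varepsilon)-y(\varepsilon)|\le 2\varepsilon$ for all $\varepsilon\in\mathbb{Q}^+$. For rationals in lowest terms, $\frac{n_1}{d_1}$ is simpler than $\frac{n_2}{d_2}$ if $|n_1|+|d_1|<|n_2|+|d_2|$; every closed rational interval contains a unique simplest rational. For $a\in\mathbb{Q}$, $\varepsilon\in\mathbb{Q}^+$, $\mathrm{approx}(a,\varepsilon)$ is the simplest rational number in $[a-\varepsilon,a+\varepsilon]$. *)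

theory Defs
  imports Main "HOL.Rat"
begin

text \<open>Regular functions Q+ -> Q (values at non-positive arguments are irrelevant).\<close>
definition regular :: "(rat \<Rightarrow> rat) \<Rightarrow> bool" where
  "regular x \<longleftrightarrow> (\<forall>e1 e2. 0 < e1 \<longrightarrow> 0 < e2 \<longrightarrow> \<bar>x e1 - x e2\<bar> \<le> e1 + e2)"

definition req :: "(rat \<Rightarrow> rat) \<Rightarrow> (rat \<Rightarrow> rat) \<Rightarrow> bool" where
  "req x y \<longleftrightarrow> (\<forall>e. 0 < e \<longrightarrow> \<bar>x e - y e\<bar> \<le> 2 * e)"

definition rat_size :: "rat \<Rightarrow> int" where
  "rat_size q = (case quotient_of q of (n, d) \<Rightarrow> \<bar>n\<bar> + \<bar>d\<bar>)"

definition simpler :: "rat \<Rightarrow> rat \<Rightarrow> bool" where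
  "simpler q r \<longleftrightarrow> rat_size q < rat_size r"

definition approx :: "rat \<Rightarrow> rat \<Rightarrow> rat" where
  "approx a e = (THE q. q \<in> {a - e .. a + e} \<and>
                   (\<forall>r \<in> {a - e .. a + e}. r \<noteq> q \<longrightarrow> simpler q r))"

definition compress :: "(rat \<Rightarrow> rat) \<Rightarrow> (rat \<Rightarrow> rat)" where
  "compress x = (\<lambda>e. approx (x (e / 2)) (e / 2))"

end

theory Submission
  imports Defs
begin

text \<open>
  Any two distinct rationals of the same size |n| + |d| enclose a strictly simpler rational:
  for 0 < a/b < c/d with a + b = c + d one has b > d, and a/(b - 1) still lies in between,
  because c b - a d = (c - a)(a + b) \<ge> a + b > c.
  Hence a rational of minimal size in a closed interval is strictly simpler than every other
  point of it, so approx a e exists and lies in [a - e, a + e]. The claim is then the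
  triangle inequality
  |compress x e - x e| \<le> |compress x e - x (e/2)| + |x (e/2) - x e| \<le> e/2 + 3e/2.
\<close>

lemma rat_size_nonneg: "0 \<le> rat_size q"
  by (simp add: rat_size_def split: prod.splits)

lemma rat_size_0: "rat_size 0 = 1"
  by (simp add: rat_size_def rat_zero_code)

lemma rat_size_uminus: "rat_size (- q) = rat_size q"
  by (simp add: rat_size_def rat_uminus_code split: prod.splits)

lemma rat_size_ge_2:
  assumes "q \<noteq> 0"
  shows "2 \<le> rat_size q"
proof -
  obtain n d where nd: "quotient_of q = (n, d)" by (cases "quotient_of q")
  have "0 < d" using quotient_of_denom_pos[OF nd] .
  moreover have "n \<noteq> 0" using quotient_of_div[OF nd] assms by auto
  ultimately show ?thesis using nd by (simp add: rat_size_def)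
qed

lemma rat_size_quotient_le:
  assumes "0 < b"
  shows "rat_size (of_int a / of_int b) \<le> \<bar>a\<bar> + b"
proof -
  define g where "g = gcd a b"
  have g: "0 < g" "g dvd a" "g dvd b" using assms by (simp_all add: g_def)
  have "\<bar>c div g\<bar> \<le> \<bar>c\<bar>" if "g dvd c" for c
    using that g(1) by (auto simp: abs_mult mult_le_cancel_right1 elim!: dvdE)
  then have "\<bar>a div g\<bar> \<le> \<bar>a\<bar>" "\<bar>b div g\<bar> \<le> b"
    using g assms by (metis abs_of_pos)+
  moreover have "quotient_of (of_int a / of_int b) = (a div g, b div g)"
    using assms by (simp add: Fract_of_int_quotient [symmetric] quotient_of_Fract
        normalize_def g_def Let_def)
  ultimately show ?thesis by (simp add: rat_size_def)
qed

lemma simpler_between_pos: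
  assumes "0 < q" "q < r" "rat_size q = rat_size r"
  obtains t where "q \<le> t" "t \<le> r" "rat_size t < rat_size q"
proof -
  obtain a b where ab: "quotient_of q = (a, b)" by (cases "quotient_of q")
  obtain c d where cd: "quotient_of r = (c, d)" by (cases "quotient_of r")
  have b: "0 < b" and d: "0 < d"
    using quotient_of_denom_pos[OF ab] quotient_of_denom_pos[OF cd] .
  have q: "q = of_int a / of_int b" and r: "r = of_int c / of_int d"
    using quotient_of_div[OF ab] quotient_of_div[OF cd] .
  have a: "0 < a" using assms(1) q b by (simp add: zero_less_divide_iff)
  have "0 < r" using assms(1,2) by simp
  then have c: "0 < c" using r d by (simp add: zero_less_divide_iff)
  have size: "a + b = c + d" using assms(3) ab cd a b c d by (simp add: rat_size_def)
  have cross: "a * d < c * b"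
    using assms(2) b d by (simp add: q r divide_simps flip: of_int_mult)
  have "d < b"
  proof (rule ccontr)
    assume "\<not> d < b"
    then have "b \<le> d" "c \<le> a" using size by auto
    then have "c * b \<le> a * d" using b c by (simp add: mult_mono)
    then show False using cross by simp
  qed
  have "c * b - a * d = (c - a) * (a + b)" using size by algebra
  moreover have "a + b \<le> (c - a) * (a + b)" using size \<open>d < b\<close> a b by simp
  moreover have "c * (b - 1) = c * b - c" by (simp add: algebra_simps)
  ultimately have "a * d \<le> c * (b - 1)" using size d by linarith
  define t where "t = (of_int a / of_int (b - 1) :: rat)"
  have b1: "0 < b - 1" using \<open>d < b\<close> d by simp
  show thesis
  proof
    show "q \<le> t" unfolding q t_def using a b1 by (simp add: divide_left_mono)
    show "t \<le> r" unfolding r t_def using b1 d \<open>a * d \<le> c * (b - 1)\<close>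
      by (simp add: divide_simps flip: of_int_mult of_int_diff)
    show "rat_size t < rat_size q"
      using rat_size_quotient_le[OF b1, of a] ab a by (simp add: t_def rat_size_def)
  qed
qed

lemma simpler_between:
  assumes "q < r" "rat_size q = rat_size r"
  obtains t where "q \<le> t" "t \<le> r" "rat_size t < rat_size q"
proof (cases "0 < q")
  case True
  with assms show thesis by (blast intro: that elim: simpler_between_pos)
next
  case q: False
  show thesis
  proof (cases "r < 0")
    case True
    obtain t where "- r \<le> t" "t \<le> - q" "rat_size t < rat_size (- r)"
      by (rule simpler_between_pos[of "- r" "- q"]) (use assms True in \<open>auto simp: rat_size_uminus\<close>)
    with assms show thesis by (intro that[of "- t"]) (auto simp: rat_size_uminus)
  next
    case False
    with assms have "q \<noteq> 0" using rat_size_0 rat_size_ge_2[of r] by (cases "r = 0") auto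
    then have "rat_size 0 < rat_size q" using rat_size_0 rat_size_ge_2[of q] by simp
    with q False show thesis by (intro that[of 0]) auto
  qed
qed

lemma ex1_simplest_in_interval:
  fixes a b :: rat
  assumes "a \<le> b"
  shows "\<exists>!q. q \<in> {a..b} \<and> (\<forall>r \<in> {a..b}. r \<noteq> q \<longrightarrow> simpler q r)"
proof -
  obtain q where q: "q \<in> {a..b}" and min: "\<And>r. r \<in> {a..b} \<Longrightarrow> rat_size q \<le> rat_size r"
    using ex_has_least_nat[of "\<lambda>q. q \<in> {a..b}" a "\<lambda>q. nat (rat_size q)"] assms
      rat_size_nonneg by (auto simp: nat_le_eq_zle)
  have simplest: "simpler q r" if r: "r \<in> {a..b}" "r \<noteq> q" for r
  proof (rule ccontr)
    assume "\<not> simpler q r"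
    with min[OF r(1)] have size: "rat_size (min q r) = rat_size (max q r)"
      by (simp add: simpler_def min_def max_def)
    from r(2) have "min q r < max q r" by (simp add: min_def max_def)
    with size obtain t where "min q r \<le> t" "t \<le> max q r" "rat_size t < rat_size (min q r)"
      by (elim simpler_between)
    moreover from this(1,2) q r(1) have "t \<in> {a..b}" by auto
    ultimately show False using min size by (fastforce simp: min_def max_def split: if_splits)
  qed
  show ?thesis
  proof (rule ex1I)
    show "q \<in> {a..b} \<and> (\<forall>r \<in> {a..b}. r \<noteq> q \<longrightarrow> simpler q r)"
      using q simplest by blast
    fix p
    assume p: "p \<in> {a..b} \<and> (\<forall>r \<in> {a..b}. r \<noteq> p \<longrightarrow> simpler p r)"
    show "p = q"
    proof (rule ccontr)
      assume "p \<noteq> q"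
      with p q simplest have "simpler p q" "simpler q p" by auto
      then show False by (simp add: simpler_def)
    qed
  qed
qed

lemma approx_mem:
  assumes "0 \<le> e"
  shows "approx a e \<in> {a - e .. a + e}"
  using theI'[OF ex1_simplest_in_interval] assms unfolding approx_def by simp

theorem theorem37:
  fixes x :: "rat \<Rightarrow> rat"
  assumes "regular x"
  shows "req (compress x) x"
  unfolding req_def
proof (intro allI impI)
  fix e :: rat
  assume e: "0 < e"
  have "\<bar>compress x e - x (e / 2)\<bar> \<le> e / 2"
    using approx_mem[of "e / 2" "x (e / 2)"] e unfolding compress_def abs_diff_le_iff by simp
  moreover have "\<bar>x (e / 2) - x e\<bar> \<le> e / 2 + e"
    using assms e unfolding regular_def by (metis half_gt_zero)
  ultimately show "\<bar>compress x e - x e\<bar> \<le> 2 * e" by linarith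
qed

end
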